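(* Let $G$ be a graph of order $n$ with adjacency eigenvalues $\lambda_1(G)\ge\cdots\ge\lambda_n(G)$, let $F$ be a clique partition of $G$, and let $t_1^F$ be the largest clique-degree of $G$ with respect to $F$. Then $$\lambda_n(G)\ge -t_1^F.$$ Moreover, if equality holds then $\mathrm{rank}(\mathcal M_F)<n$; and if $\mathrm{rank}(\mathcal M_F)<n$ and $G$ is clique-regular with respect to $F$, then equality holds.
   Context: All graphs are finite and simple. A clique of $G$ is a set of pairwise adjacent vertices. A clique partition of $G$ is a set $F=\{C_1,\dots,C_k\}$ of cliques of $G$ such that every edge of $G$ lies in exactly one $C_j$. For $V(G)=\{1,\dots,n\}$, the vertex-clique incidence matrix $\mathcal M_F$ is the $n\times k$ $(0,1)$-matrix whose $(i,j)$-entry is $1$ iff vertex $i\in C_j$. The clique-degree of vertex $i$ is $t_i^F=|\{j: i\in C_j\}|$; $t_1^F$ denotes the largest clique-degree. $G$ is clique-regular (with respect to $F$) if all $t_i^F$ are equal. Eigenvalues of $G$ are those of its adjacency matrix. *)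

theory Defs
  imports "Jordan_Normal_Form.Char_Poly" "Jordan_Normal_Form.DL_Rank"
begin

definition simple_graph :: "nat \<Rightarrow> (nat \<Rightarrow> nat \<Rightarrow> bool) \<Rightarrow> bool" where
  "simple_graph n E \<longleftrightarrow> (\<forall>x y. E x y \<longrightarrow> x < n \<and> y < n \<and> x \<noteq> y \<and> E y x)"

definition adj_mat :: "nat \<Rightarrow> (nat \<Rightarrow> nat \<Rightarrow> bool) \<Rightarrow> real mat" where
  "adj_mat n E = mat n n (\<lambda>(i, j). if E i j then 1 else 0)"

definition least_eigenvalue :: "real mat \<Rightarrow> real" where
  "least_eigenvalue A = Min {k. eigenvalue A k}"

definition is_clique :: "nat \<Rightarrow> (nat \<Rightarrow> nat \<Rightarrow> bool) \<Rightarrow> nat set \<Rightarrow> bool" where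
  "is_clique n E C \<longleftrightarrow> C \<subseteq> {0..<n} \<and> (\<forall>x\<in>C. \<forall>y\<in>C. x \<noteq> y \<longrightarrow> E x y)"

text \<open>A clique partition F = {C_1,...,C_k}, enumerated without repetition by the list Cs.\<close>
definition clique_partition :: "nat \<Rightarrow> (nat \<Rightarrow> nat \<Rightarrow> bool) \<Rightarrow> nat set list \<Rightarrow> bool" where
  "clique_partition n E Cs \<longleftrightarrow> distinct Cs \<and> (\<forall>C\<in>set Cs. is_clique n E C) \<and>
     (\<forall>x y. E x y \<longrightarrow> (\<exists>!j. j < length Cs \<and> x \<in> Cs ! j \<and> y \<in> Cs ! j))"

definition inc_mat :: "nat \<Rightarrow> nat set list \<Rightarrow> real mat" where
  "inc_mat n Cs = mat n (length Cs) (\<lambda>(i, j). if i \<in> Cs ! j then 1 else 0)"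

definition clique_deg :: "nat set list \<Rightarrow> nat \<Rightarrow> nat" where
  "clique_deg Cs i = card {j. j < length Cs \<and> i \<in> Cs ! j}"

definition max_clique_deg :: "nat \<Rightarrow> nat set list \<Rightarrow> nat" where
  "max_clique_deg n Cs = Max (clique_deg Cs ` {0..<n})"

definition clique_regular :: "nat \<Rightarrow> nat set list \<Rightarrow> bool" where
  "clique_regular n Cs \<longleftrightarrow> (\<forall>i<n. \<forall>j<n. clique_deg Cs i = clique_deg Cs j)"

end

theory Submission
  imports Defs "Jordan_Normal_Form.Spectral_Radius"
begin

(* Let A be the adjacency matrix, M the vertex-clique incidence matrix and D the diagonal matrix
   of clique-degrees. Since F partitions the edges, M M^T = A + D. For an eigenvector v of A with
   eigenvalue l this gives |M^T v|^2 = v^T (A + D) v = sum_i (l + t_i) v_i^2 <= (l + t_1) |v|^2,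
   so l >= -t_1, and equality forces M^T v = 0, i.e. rank M < n. Conversely a nonzero v with
   M^T v = 0 satisfies A v = - D v, which is -t_1 v when G is clique-regular. *)

context vec_space
begin

lemma maximal_indpt_cols_exists: "\<exists>S. maximal S (\<lambda>T. T \<subseteq> set (cols A) \<and> lin_indpt T)"
  using maximal_exists[of "\<lambda>T. T \<subseteq> set (cols A) \<and> lin_indpt T" "card (set (cols A))" "{}"]
  by (meson List.finite_set card_mono empty_iff empty_subsetI finite_lin_indpt2 rev_finite_subset)

lemma rank_le_dim_row:
  assumes "A \<in> carrier_mat n nc"
  shows "rank A \<le> n"
proof -
  obtain S where S: "maximal S (\<lambda>T. T \<subseteq> set (cols A) \<and> lin_indpt T)"
    using maximal_indpt_cols_exists by blast
  have "set (cols A) \<subseteq> carrier_vec n" using assms cols_dim by blast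
  then have "card S \<le> dim" using li_le_dim(2)[OF fin_dim, of S] S unfolding maximal_def by auto
  then show ?thesis using rank_card_indpt[OF assms S] dim_is_n by simp
qed

lemma rank_eq_dim_row_iff_col_space:
  assumes A: "A \<in> carrier_mat n nc"
  shows "rank A = n \<longleftrightarrow> col_space A = carrier_vec n"
proof
  assume rank: "rank A = n"
  obtain S where S: "maximal S (\<lambda>T. T \<subseteq> set (cols A) \<and> lin_indpt T)"
    using maximal_indpt_cols_exists by blast
  have cols: "set (cols A) \<subseteq> carrier_vec n" using A cols_dim by blast
  have SA: "S \<subseteq> set (cols A)" "lin_indpt S" using S unfolding maximal_def by auto
  have "card S = n" using rank_card_indpt[OF A S] rank by simp
  then have "basis S"
    using dim_li_is_basis[OF fin_dim _ _ SA(2)] SA cols dim_is_n finite_subset by auto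
  then have "span S = carrier_vec n" unfolding basis_def by auto
  moreover have "span S \<subseteq> span (set (cols A))" using span_is_monotone SA(1) by metis
  moreover have "span (set (cols A)) \<subseteq> carrier_vec n" using cols span_closed by auto
  ultimately show "col_space A = carrier_vec n" unfolding col_space_def by auto
next
  assume "col_space A = carrier_vec n"
  then have "span_vs (set (cols A)) = V" unfolding col_space_def by simp
  then show "rank A = n" unfolding rank_def using dim_is_n by simp
qed

lemma rank_eq_dim_row_iff_surj:
  assumes A: "A \<in> carrier_mat n nc"
  shows "rank A = n \<longleftrightarrow> (\<forall>y\<in>carrier_vec n. \<exists>x\<in>carrier_vec nc. A *\<^sub>v x = y)"
  unfolding rank_eq_dim_row_iff_col_space[OF A] col_space_eq[OF A] using A by auto

end

lemma real_scalar_prod_self_eq_0_iff: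
  fixes v :: "real vec"
  assumes "v \<in> carrier_vec n"
  shows "v \<bullet> v = 0 \<longleftrightarrow> v = 0\<^sub>v n"
  using conjugate_square_eq_0_vec[OF assms] by simp

lemma singular_gram_imp_left_null_vector:
  fixes M :: "real mat"
  assumes M: "M \<in> carrier_mat n k" and det: "det (M * M\<^sup>T) = 0"
  obtains v where "v \<in> carrier_vec n" "v \<noteq> 0\<^sub>v n" "M\<^sup>T *\<^sub>v v = 0\<^sub>v k"
proof -
  have MMt: "M * M\<^sup>T \<in> carrier_mat n n" using M by simp
  obtain v where v: "v \<in> carrier_vec n" "v \<noteq> 0\<^sub>v n" "(M * M\<^sup>T) *\<^sub>v v = 0\<^sub>v n"
    using det_0_iff_vec_prod_zero_field[OF MMt] det by auto
  have Mtv: "M\<^sup>T *\<^sub>v v \<in> carrier_vec k" using M v(1) by simp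
  have "(M\<^sup>T *\<^sub>v v) \<bullet> (M\<^sup>T *\<^sub>v v) = v \<bullet> ((M * M\<^sup>T) *\<^sub>v v)"
    using transpose_vec_mult_scalar[OF M Mtv v(1)] M v(1) by (simp add: assoc_mult_mat_vec)
  also have "\<dots> = 0" using v by simp
  finally have "M\<^sup>T *\<^sub>v v = 0\<^sub>v k" using real_scalar_prod_self_eq_0_iff[OF Mtv] by simp
  with v(1,2) show ?thesis by (rule that)
qed

lemma rank_lt_dim_row_iff_left_null_vector:
  fixes M :: "real mat"
  assumes M: "M \<in> carrier_mat n k"
  shows "vec_space.rank n M < n \<longleftrightarrow> (\<exists>v\<in>carrier_vec n. v \<noteq> 0\<^sub>v n \<and> M\<^sup>T *\<^sub>v v = 0\<^sub>v k)"
proof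
  assume rank: "vec_space.rank n M < n"
  have "det (M * M\<^sup>T) = 0"
  proof (rule ccontr)
    assume "det (M * M\<^sup>T) \<noteq> 0"
    then have "vec_space.rank n (M * M\<^sup>T) = n"
      using vec_space.det_rank_iff[of "M * M\<^sup>T" n] M by simp
    then have "\<forall>y\<in>carrier_vec n. \<exists>x\<in>carrier_vec n. (M * M\<^sup>T) *\<^sub>v x = y"
      using vec_space.rank_eq_dim_row_iff_surj[of "M * M\<^sup>T" n n] M by simp
    moreover have "(M * M\<^sup>T) *\<^sub>v x = M *\<^sub>v (M\<^sup>T *\<^sub>v x)" "M\<^sup>T *\<^sub>v x \<in> carrier_vec k"
      if "x \<in> carrier_vec n" for x
      using M that by auto
    ultimately have "\<forall>y\<in>carrier_vec n. \<exists>x\<in>carrier_vec k. M *\<^sub>v x = y" by metis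
    then show False using rank vec_space.rank_eq_dim_row_iff_surj[OF M] by simp
  qed
  then show "\<exists>v\<in>carrier_vec n. v \<noteq> 0\<^sub>v n \<and> M\<^sup>T *\<^sub>v v = 0\<^sub>v k"
    using singular_gram_imp_left_null_vector[OF M] by metis
next
  assume "\<exists>v\<in>carrier_vec n. v \<noteq> 0\<^sub>v n \<and> M\<^sup>T *\<^sub>v v = 0\<^sub>v k"
  then obtain v where v: "v \<in> carrier_vec n" "v \<noteq> 0\<^sub>v n" "M\<^sup>T *\<^sub>v v = 0\<^sub>v k" by blast
  show "vec_space.rank n M < n"
  proof (rule ccontr)
    assume "\<not> vec_space.rank n M < n"
    then have "vec_space.rank n M = n" using vec_space.rank_le_dim_row[OF M] by simp
    then obtain x where x: "x \<in> carrier_vec k" "M *\<^sub>v x = v"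
      using vec_space.rank_eq_dim_row_iff_surj[OF M] v(1) by blast
    have "v \<bullet> v = (M\<^sup>T *\<^sub>v v) \<bullet> x" using transpose_vec_mult_scalar[OF M x(1) v(1)] x(2) by simp
    also have "\<dots> = 0" using v(3) x(1) by simp
    finally show False using real_scalar_prod_self_eq_0_iff[OF v(1)] v(2) by simp
  qed
qed

lemma conjugate_of_real_mat_mult_vec:
  fixes A :: "real mat" and w :: "complex vec"
  assumes "A \<in> carrier_mat n m" "w \<in> carrier_vec m"
  shows "conjugate (map_mat of_real A *\<^sub>v w) = map_mat of_real A *\<^sub>v conjugate w"
  using assms by (intro eq_vecI) (auto simp: scalar_prod_def sum_conjugate conjugate_dist_mul)

lemma eigenvalue_of_real_symmetric_mat_real:
  fixes A :: "real mat" and l :: complex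
  assumes A: "A \<in> carrier_mat n n" and sym: "A\<^sup>T = A"
    and l: "eigenvalue (map_mat of_real A) l"
  shows "l \<in> \<real>"
proof -
  let ?B = "map_mat complex_of_real A"
  have B: "?B \<in> carrier_mat n n" "?B\<^sup>T = ?B" using A sym by (auto simp: map_mat_transpose)
  obtain w where w: "w \<in> carrier_vec n" "w \<noteq> 0\<^sub>v n" "?B *\<^sub>v w = l \<cdot>\<^sub>v w"
    using l B unfolding eigenvalue_def eigenvector_def by auto
  have cw: "conjugate w \<in> carrier_vec n" using w(1) by simp
  have "l * (w \<bullet>c w) = (?B *\<^sub>v w) \<bullet>c w" using w(1,3) cw by simp
  also have "\<dots> = w \<bullet> (?B *\<^sub>v conjugate w)"
    using transpose_vec_mult_scalar[OF B(1) cw w(1)] B(2) by simp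
  also have "\<dots> = w \<bullet>c (?B *\<^sub>v w)" using conjugate_of_real_mat_mult_vec[OF A w(1)] by simp
  also have "\<dots> = cnj l * (w \<bullet>c w)" using w(1,3) cw by (simp add: conjugate_smult_vec)
  finally have "(l - cnj l) * (w \<bullet>c w) = 0" by (simp add: algebra_simps)
  moreover have "w \<bullet>c w \<noteq> 0" using conjugate_square_eq_0_vec[OF w(1)] w(2) by simp
  ultimately show ?thesis by (simp add: Reals_cnj_iff)
qed

lemma symmetric_real_mat_has_eigenvalue:
  fixes A :: "real mat"
  assumes A: "A \<in> carrier_mat n n" and sym: "A\<^sup>T = A" and n: "n > 0"
  obtains l where "eigenvalue A l"
proof -
  let ?B = "map_mat complex_of_real A"
  have B: "?B \<in> carrier_mat n n" using A by simp
  obtain l where l: "eigenvalue ?B l"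
    using spectrum_non_empty[OF B n] unfolding spectrum_def by auto
  have "l = of_real (Re l)" using eigenvalue_of_real_symmetric_mat_real[OF A sym l] by simp
  then have "of_real (poly (char_poly A) (Re l)) = (0 :: complex)"
    using l eigenvalue_root_char_poly[OF B] of_real_hom.char_poly_hom[OF A] by (metis of_real_hom.poly_map_poly)
  then have "eigenvalue A (Re l)" using eigenvalue_root_char_poly[OF A] by simp
  then show ?thesis by (rule that)
qed

lemma mat_diag_mult_vec:
  assumes "v \<in> carrier_vec n"
  shows "mat_diag n d *\<^sub>v v = vec n (\<lambda>i. d i * v $ i)"
proof (rule eq_vecI)
  fix i assume "i < dim_vec (vec n (\<lambda>i. d i * v $ i))"
  then show "(mat_diag n d *\<^sub>v v) $ i = vec n (\<lambda>i. d i * v $ i) $ i"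
    using assms by (auto simp: mat_diag_def scalar_prod_def sum.remove[of _ i] intro!: sum.neutral)
qed (simp add: mat_diag_def)

lemma gram_eigenvector_norm_le:
  fixes A M :: "real mat"
  assumes A: "A \<in> carrier_mat n n" and M: "M \<in> carrier_mat n k"
    and gram: "M * M\<^sup>T = A + mat_diag n d" and d: "\<And>i. i < n \<Longrightarrow> d i \<le> T"
    and v: "eigenvector A v l"
  shows "(M\<^sup>T *\<^sub>v v) \<bullet> (M\<^sup>T *\<^sub>v v) \<le> (l + T) * (v \<bullet> v)"
proof -
  have v: "v \<in> carrier_vec n" "A *\<^sub>v v = l \<cdot>\<^sub>v v" using v A unfolding eigenvector_def by auto
  have Mtv: "M\<^sup>T *\<^sub>v v \<in> carrier_vec k" using M v(1) by simp
  have "(M * M\<^sup>T) *\<^sub>v v = vec n (\<lambda>i. (l + d i) * v $ i)"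
    unfolding gram using A v by (auto simp: add_mult_distrib_mat_vec mat_diag_mult_vec algebra_simps)
  then have "(M\<^sup>T *\<^sub>v v) \<bullet> (M\<^sup>T *\<^sub>v v) = (\<Sum>i<n. (l + d i) * (v $ i * v $ i))"
    using transpose_vec_mult_scalar[OF M Mtv v(1)] M v(1)
    by (auto simp: scalar_prod_def lessThan_atLeast0 mult_ac intro!: sum.cong)
  also have "\<dots> \<le> (\<Sum>i<n. (l + T) * (v $ i * v $ i))"
    using d by (intro sum_mono mult_right_mono) auto
  also have "\<dots> = (l + T) * (v \<bullet> v)"
    using v(1) by (simp add: scalar_prod_def lessThan_atLeast0 sum_distrib_left)
  finally show ?thesis .
qed

lemma gram_eigenvalue_lower_bound:
  fixes A M :: "real mat"
  assumes A: "A \<in> carrier_mat n n" and M: "M \<in> carrier_mat n k"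
    and gram: "M * M\<^sup>T = A + mat_diag n d" and d: "\<And>i. i < n \<Longrightarrow> d i \<le> T"
    and v: "eigenvector A v l"
  shows "- T \<le> l" and "l = - T \<Longrightarrow> M\<^sup>T *\<^sub>v v = 0\<^sub>v k"
proof -
  have v': "v \<in> carrier_vec n" "v \<noteq> 0\<^sub>v n" using v A unfolding eigenvector_def by auto
  have Mtv: "M\<^sup>T *\<^sub>v v \<in> carrier_vec k" using M v'(1) by simp
  have le: "(M\<^sup>T *\<^sub>v v) \<bullet> (M\<^sup>T *\<^sub>v v) \<le> (l + T) * (v \<bullet> v)"
    by (rule gram_eigenvector_norm_le[OF A M gram d v])
  have "(M\<^sup>T *\<^sub>v v) \<bullet> (M\<^sup>T *\<^sub>v v) \<ge> 0" "v \<bullet> v > 0"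
    using conjugate_square_ge_0_vec[of "M\<^sup>T *\<^sub>v v"] conjugate_square_greater_0_vec[OF v'(1)] v'(2)
    by simp_all
  with le have "0 \<le> (l + T) * (v \<bullet> v)" by linarith
  with \<open>v \<bullet> v > 0\<close> show "- T \<le> l" by (simp add: zero_le_mult_iff)
  assume "l = - T"
  with le \<open>(M\<^sup>T *\<^sub>v v) \<bullet> (M\<^sup>T *\<^sub>v v) \<ge> 0\<close> have "(M\<^sup>T *\<^sub>v v) \<bullet> (M\<^sup>T *\<^sub>v v) = 0" by simp
  then show "M\<^sup>T *\<^sub>v v = 0\<^sub>v k" using real_scalar_prod_self_eq_0_iff[OF Mtv] by simp
qed

lemma left_null_vector_imp_eigenvector:
  fixes A M :: "real mat"
  assumes A: "A \<in> carrier_mat n n" and M: "M \<in> carrier_mat n k"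
    and gram: "M * M\<^sup>T = A + mat_diag n d" and d: "\<And>i. i < n \<Longrightarrow> d i = c"
    and v: "v \<in> carrier_vec n" "v \<noteq> 0\<^sub>v n" "M\<^sup>T *\<^sub>v v = 0\<^sub>v k"
  shows "eigenvector A v (- c)"
proof -
  have "0\<^sub>v n = M *\<^sub>v (M\<^sup>T *\<^sub>v v)" using M v(3) by (auto simp: scalar_prod_def)
  also have "\<dots> = (A + mat_diag n d) *\<^sub>v v" using M v(1) by (simp flip: gram)
  also have "\<dots> = A *\<^sub>v v + mat_diag n d *\<^sub>v v"
    using A v(1) by (simp add: add_mult_distrib_mat_vec)
  also have "mat_diag n d *\<^sub>v v = c \<cdot>\<^sub>v v"
    using v(1) d by (auto simp: mat_diag_mult_vec intro!: eq_vecI)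
  finally have "A *\<^sub>v v = (- c) \<cdot>\<^sub>v v" using A v(1) by (auto intro!: eq_vecI simp: vec_eq_iff)
  then show ?thesis using A v(1,2) unfolding eigenvector_def by simp
qed

lemma least_eigenvalue_le:
  assumes "A \<in> carrier_mat n n" and "eigenvalue A l"
  shows "least_eigenvalue A \<le> l"
  using card_finite_spectrum(1)[OF assms(1)] assms(2)
  unfolding least_eigenvalue_def spectrum_def by simp

lemma eigenvalue_least_eigenvalue:
  assumes "A \<in> carrier_mat n n" and "A\<^sup>T = A" and "n > 0"
  shows "eigenvalue A (least_eigenvalue A)"
proof -
  obtain l where "eigenvalue A l" using symmetric_real_mat_has_eigenvalue[OF assms] .
  then have "{l. eigenvalue A l} \<noteq> {}" by auto
  then show ?thesis
    using Min_in card_finite_spectrum(1)[OF assms(1)]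
    unfolding least_eigenvalue_def spectrum_def by auto
qed

lemma adj_mat_carrier: "adj_mat n E \<in> carrier_mat n n"
  unfolding adj_mat_def by simp

lemma inc_mat_carrier: "inc_mat n Cs \<in> carrier_mat n (length Cs)"
  unfolding inc_mat_def by simp

lemma adj_mat_transpose:
  assumes "simple_graph n E"
  shows "(adj_mat n E)\<^sup>T = adj_mat n E"
  using assms unfolding adj_mat_def simple_graph_def by (auto intro!: eq_matI)

lemma card_common_cliques:
  assumes cp: "clique_partition n E Cs"
  shows "card {c. c < length Cs \<and> i \<in> Cs ! c \<and> j \<in> Cs ! c}
    = (if i = j then clique_deg Cs i else if E i j then 1 else 0)"
proof (cases "i = j")
  case True
  then show ?thesis unfolding clique_deg_def by simp
next
  case False
  show ?thesis
  proof (cases "E i j")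
    case True
    then obtain c where "c < length Cs" "i \<in> Cs ! c" "j \<in> Cs ! c"
      and unique: "\<And>c'. c' < length Cs \<Longrightarrow> i \<in> Cs ! c' \<Longrightarrow> j \<in> Cs ! c' \<Longrightarrow> c' = c"
      using cp unfolding clique_partition_def by metis
    then have "{c. c < length Cs \<and> i \<in> Cs ! c \<and> j \<in> Cs ! c} = {c}" by blast
    then show ?thesis using False True by simp
  next
    case no_edge: False
    have "\<not> (c < length Cs \<and> i \<in> Cs ! c \<and> j \<in> Cs ! c)" for c
      using cp no_edge False nth_mem unfolding clique_partition_def is_clique_def by blast
    then show ?thesis using False no_edge by simp
  qed
qed

lemma inc_mat_mult_transpose:
  assumes sg: "simple_graph n E" and cp: "clique_partition n E Cs"
  shows "inc_mat n Cs * (inc_mat n Cs)\<^sup>T = adj_mat n E + mat_diag n (\<lambda>i. real (clique_deg Cs i))"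
proof (rule eq_matI)
  fix i j
  assume "i < dim_row (adj_mat n E + mat_diag n (\<lambda>i. real (clique_deg Cs i)))"
    and "j < dim_col (adj_mat n E + mat_diag n (\<lambda>i. real (clique_deg Cs i)))"
  then have ij: "i < n" "j < n" by (simp_all add: mat_diag_def)
  have irrefl: "\<not> E i i" using sg unfolding simple_graph_def by blast
  have "(inc_mat n Cs * (inc_mat n Cs)\<^sup>T) $$ (i, j)
      = (\<Sum>c\<in>{0..<length Cs}. if i \<in> Cs ! c \<and> j \<in> Cs ! c then 1 else 0)"
    using ij by (auto simp: inc_mat_def scalar_prod_def intro!: sum.cong)
  also have "\<dots> = real (card {c. c < length Cs \<and> i \<in> Cs ! c \<and> j \<in> Cs ! c})"
    by (simp add: sum.If_cases atLeast0LessThan Collect_conj_eq lessThan_def)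
  also have "\<dots> = (adj_mat n E + mat_diag n (\<lambda>i. real (clique_deg Cs i))) $$ (i, j)"
    using card_common_cliques[OF cp, of i j] ij irrefl
    by (auto simp: adj_mat_def mat_diag_def)
  finally show "(inc_mat n Cs * (inc_mat n Cs)\<^sup>T) $$ (i, j)
      = (adj_mat n E + mat_diag n (\<lambda>i. real (clique_deg Cs i))) $$ (i, j)" .
qed (simp_all add: inc_mat_def adj_mat_def mat_diag_def)

lemma clique_deg_le_max:
  assumes "i < n"
  shows "clique_deg Cs i \<le> max_clique_deg n Cs"
  using assms unfolding max_clique_deg_def by simp

lemma clique_regular_clique_deg_eq_max:
  assumes "clique_regular n Cs" and "i < n"
  shows "clique_deg Cs i = max_clique_deg n Cs"
proof -
  define c where "c = clique_deg Cs i"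
  have c: "clique_deg Cs j = c" if "j < n" for j
    using assms that unfolding clique_regular_def c_def by blast
  then have "clique_deg Cs ` {0..<n} = {c}" using assms(2) by force
  then show ?thesis unfolding max_clique_deg_def c_def by simp
qed

theorem mainTheorem1:
  fixes n :: nat and E :: "nat \<Rightarrow> nat \<Rightarrow> bool" and Cs :: "nat set list"
  assumes "n \<ge> 1" and "simple_graph n E" and "clique_partition n E Cs"
  shows "least_eigenvalue (adj_mat n E) \<ge> - real (max_clique_deg n Cs)
    \<and> (least_eigenvalue (adj_mat n E) = - real (max_clique_deg n Cs)
           \<longrightarrow> vec_space.rank n (inc_mat n Cs) < n)
    \<and> (vec_space.rank n (inc_mat n Cs) < n \<and> clique_regular n Cs
           \<longrightarrow> least_eigenvalue (adj_mat n E) = - real (max_clique_deg n Cs))"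
proof -
  let ?A = "adj_mat n E" and ?M = "inc_mat n Cs" and ?T = "real (max_clique_deg n Cs)"
  note A = adj_mat_carrier[of n E] and M = inc_mat_carrier[of n Cs]
  note gram = inc_mat_mult_transpose[OF assms(2,3)]
  have deg_le: "real (clique_deg Cs i) \<le> ?T" if "i < n" for i
    using clique_deg_le_max[OF that] by simp
  obtain v where v: "eigenvector ?A v (least_eigenvalue ?A)"
    using eigenvalue_least_eigenvalue[OF A adj_mat_transpose[OF assms(2)]] assms(1)
    unfolding eigenvalue_def by auto
  have bound: "- ?T \<le> least_eigenvalue ?A"
    "least_eigenvalue ?A = - ?T \<Longrightarrow> ?M\<^sup>T *\<^sub>v v = 0\<^sub>v (length Cs)"
    using gram_eigenvalue_lower_bound[OF A M gram _ v] deg_le by blast+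
  have "vec_space.rank n ?M < n" if "least_eigenvalue ?A = - ?T"
    using bound(2)[OF that] v A unfolding rank_lt_dim_row_iff_left_null_vector[OF M] eigenvector_def
    by auto
  moreover have "least_eigenvalue ?A = - ?T" if rank: "vec_space.rank n ?M < n" and reg: "clique_regular n Cs"
  proof -
    obtain w where "w \<in> carrier_vec n" "w \<noteq> 0\<^sub>v n" "?M\<^sup>T *\<^sub>v w = 0\<^sub>v (length Cs)"
      using rank unfolding rank_lt_dim_row_iff_left_null_vector[OF M] by blast
    then have "eigenvector ?A w (- ?T)"
      using left_null_vector_imp_eigenvector[OF A M gram] clique_regular_clique_deg_eq_max[OF reg]
      by simp
    then show ?thesis using least_eigenvalue_le[OF A] bound(1) unfolding eigenvalue_def by force
  qed
  ultimately show ?thesis using bound(1) by blast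
qed

end
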